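(* Let $k$ be a perfect field of characteristic $p>0$, $S=k[x_1,\dots,x_n]$, $I\subseteq S$ a squarefree monomial ideal and $R=S/I$ the Stanley-Reisner ring. Then the $R$-Cartier algebra $\mathcal{C}(R)$ is gauge bounded.
   Context: For $e\ge0$, $F^e_*R$ is $R$ with $R$-structure $r\cdot m=r^{p^e}m$; $\mathcal{C}_e(R)=\mathrm{Hom}_R(F^e_*R,R)$ is the set of $p^{-e}$-linear maps $\psi:R\to R$ (additive with $\psi(r^{p^e}m)=r\psi(m)$), and $\mathcal{C}(R)=\bigoplus_{e\ge0}\mathcal{C}_e(R)$ is the graded ring with multiplication by composition ($\mathcal{C}_0(R)=R$); $\mathcal{C}_+(R)=\bigoplus_{e\ge1}\mathcal{C}_e(R)$, a right $R$-module. Gauge: for $\alpha\in\mathbb{N}_0^n$ let $\|\alpha\|=\max_j\alpha_j$; let $S_d$ be the $k$-span of monomials ${\bf x}^\alpha$ with $\|\alpha\|\le d$. For a finitely generated $S$-module $M$ with generators $m_1,\dots,m_k$, set $M_d=S_d\cdot\langle m_1,\dots,m_k\rangle$ and $\delta(m)=d$ if $m\in M_d\setminus M_{d-1}$, $\delta(0)=-\infty$; the standard gauge on $R$ is the one induced by the generator $1_R$. $\mathcal{C}(R)$ is gauge bounded if for some (equivalently each) gauge $\delta$ on $R$ there is a family $\{\psi_i\in\mathcal{C}_{e_i}(R)\}$ generating $\mathcal{C}_+(R)$ as a right $R$-module and a constant $K$ with $\delta(\psi_i(r))\le \delta(r)/p^{e_i}+K/(p-1)$ for all $i$ and all $r\in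 R$. *)

theory Defs
  imports Complex_Main "HOL-Library.Poly_Mapping" "HOL-Library.Extended_Real"
begin

text \<open>Polynomial ring S = k[x_i | i :: 'n] (with 'n a finite type of variables) as
  finitely supported maps from exponent vectors to coefficients.\<close>

type_synonym ('n, 'k) poly_ring = "('n \<Rightarrow>\<^sub>0 nat) \<Rightarrow>\<^sub>0 'k"

definition monom_x :: "('n \<Rightarrow>\<^sub>0 nat) \<Rightarrow> ('n, 'k::comm_ring_1) poly_ring" where
  "monom_x \<alpha> = Poly_Mapping.single \<alpha> 1"

definition squarefree_exp :: "('n \<Rightarrow>\<^sub>0 nat) \<Rightarrow> bool" where
  "squarefree_exp \<alpha> \<longleftrightarrow> (\<forall>j. Poly_Mapping.lookup \<alpha> j \<le> 1)"

definition monomial_ideal :: "('n \<Rightarrow>\<^sub>0 nat) set \<Rightarrow> ('n, 'k::comm_ring_1) poly_ring set" where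
  "monomial_ideal G = {f. \<exists>gs :: (('n, 'k) poly_ring \<times> ('n \<Rightarrow>\<^sub>0 nat)) list.
      (\<forall>(c, \<beta>) \<in> set gs. \<beta> \<in> G) \<and> f = sum_list (map (\<lambda>(c, \<beta>). c * monom_x \<beta>) gs)}"

definition squarefree_monomial_ideal :: "('n, 'k::comm_ring_1) poly_ring set \<Rightarrow> bool" where
  "squarefree_monomial_ideal I \<longleftrightarrow> (\<exists>G. (\<forall>\<alpha>\<in>G. squarefree_exp \<alpha>) \<and> I = monomial_ideal G)"

text \<open>Elements of R = S/I are represented by polynomials, equality being congruence mod I.
  A p^{-e}-linear map R \<rightarrow> R (an element of C_e(R)) is represented by a map
  \<psi> : S \<rightarrow> S that preserves I (so it is well defined on R), is additive mod I and
  satisfies \<psi>(r^(p^e) m) = r \<psi>(m) mod I.\<close>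
definition cartier_maps ::
  "nat \<Rightarrow> ('n, 'k::comm_ring_1) poly_ring set \<Rightarrow> nat \<Rightarrow>
   (('n, 'k) poly_ring \<Rightarrow> ('n, 'k) poly_ring) set" where
  "cartier_maps p I e = {\<psi>.
      (\<forall>m\<in>I. \<psi> m \<in> I) \<and>
      (\<forall>a b. \<psi> (a + b) - (\<psi> a + \<psi> b) \<in> I) \<and>
      (\<forall>r m. \<psi> (r ^ (p ^ e) * m) - r * \<psi> m \<in> I)}"

text \<open>The family \<Psi> (pairs (e_i, \<psi>_i) with \<psi>_i \<in> C_{e_i}(R), e_i \<ge> 1) generates
  C_+(R) = \<Oplus>_{e\<ge>1} C_e(R) as a right R-module (right action: (\<psi>\<cdot>r)(m) = \<psi>(r m)).
  Since C_+(R) is graded, this means: every \<phi> \<in> C_e(R), e \<ge> 1, is a finite sum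
  \<Sum> \<psi>_i \<cdot> r_i of generators of degree e.\<close>
definition generates_Cplus ::
  "nat \<Rightarrow> ('n, 'k::comm_ring_1) poly_ring set \<Rightarrow>
   (nat \<times> (('n, 'k) poly_ring \<Rightarrow> ('n, 'k) poly_ring)) set \<Rightarrow> bool" where
  "generates_Cplus p I \<Psi> \<longleftrightarrow>
     (\<forall>(e, \<psi>) \<in> \<Psi>. e \<ge> 1 \<and> \<psi> \<in> cartier_maps p I e) \<and>
     (\<forall>e \<ge> 1. \<forall>\<phi> \<in> cartier_maps p I e.
        \<exists>cs :: ((('n, 'k) poly_ring \<Rightarrow> ('n, 'k) poly_ring) \<times> ('n, 'k) poly_ring) list.
          (\<forall>(\<psi>, r) \<in> set cs. (e, \<psi>) \<in> \<Psi>) \<and>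
          (\<forall>m. \<phi> m - sum_list (map (\<lambda>(\<psi>, r). \<psi> (r * m)) cs) \<in> I))"

definition S_d :: "nat \<Rightarrow> ('n, 'k::comm_ring_1) poly_ring set" where
  "S_d d = {f. \<forall>\<alpha> \<in> Poly_Mapping.keys f. \<forall>j. Poly_Mapping.lookup \<alpha> j \<le> d}"

text \<open>ms (lifts of m_1,...,m_k \<in> R) generate R = S/I as an S-module.\<close>
definition generates_R :: "('n, 'k::comm_ring_1) poly_ring set \<Rightarrow> ('n, 'k) poly_ring list \<Rightarrow> bool" where
  "generates_R I ms \<longleftrightarrow>
     (\<forall>f. \<exists>ss. length ss = length ms \<and> f - sum_list (map2 (*) ss ms) \<in> I)"

definition in_M :: "('n, 'k::comm_ring_1) poly_ring set \<Rightarrow> ('n, 'k) poly_ring list \<Rightarrow> nat \<Rightarrow>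
    ('n, 'k) poly_ring \<Rightarrow> bool" where
  "in_M I ms d f \<longleftrightarrow>
     (\<exists>ss. length ss = length ms \<and> set ss \<subseteq> S_d d \<and> f - sum_list (map2 (*) ss ms) \<in> I)"

definition gauge :: "('n, 'k::comm_ring_1) poly_ring set \<Rightarrow> ('n, 'k) poly_ring list \<Rightarrow>
    ('n, 'k) poly_ring \<Rightarrow> ereal" where
  "gauge I ms f = (if f \<in> I then -\<infinity> else ereal (real (LEAST d. in_M I ms d f)))"

definition gauge_bounded :: "nat \<Rightarrow> ('n, 'k::comm_ring_1) poly_ring set \<Rightarrow> bool" where
  "gauge_bounded p I \<longleftrightarrow>
     (\<exists>ms. generates_R I ms \<and>
        (\<exists>\<Psi> (K::real). generates_Cplus p I \<Psi> \<and>
           (\<forall>(e, \<psi>) \<in> \<Psi>. \<forall>r.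
              gauge I ms (\<psi> r) \<le> gauge I ms r / ereal (real (p ^ e)) + ereal (K / (real p - 1)))))"

end

theory Submission
  imports Defs "HOL-Computational_Algebra.Primes"
begin

text \<open>
  Write \<open>q = p^e\<close>. Over a perfect field \<open>S\<close> is free over \<open>S^q\<close>, and \<open>C_e(S)\<close> is generated by
  the trace map \<open>T\<close>, which sends \<open>x^(q\<mu> + (q - 1))\<close> to \<open>x^\<mu>\<close> and every other monomial to \<open>0\<close>.
  Every \<open>\<phi> \<in> C_e(R)\<close> agrees modulo \<open>I\<close> with a sum of maps \<open>m \<mapsto> T(c^q x^D m)\<close>, one for each
  pair \<open>(\<gamma>, \<epsilon>)\<close> with \<open>\<gamma> < q\<close> coordinatewise and \<open>x^\<epsilon>\<close> occurring in \<open>\<phi>(x^\<gamma>)\<close>, where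
  \<open>D = q\<epsilon> + (q - 1) - \<gamma>\<close>. Truncating \<open>D\<close> at \<open>q\<close> in every coordinate and moving the rest into
  the right \<open>R\<close>-action gives generators \<open>m \<mapsto> T(x^D' m)\<close> with \<open>D' \<le> q\<close>. Because \<open>I\<close> is
  squarefree, whether a monomial lies in \<open>I\<close> depends only on its support, and this shows that
  the truncated maps still preserve \<open>I\<close>. Finally, if all exponents of \<open>s\<close> are at most \<open>d\<close>, those
  of \<open>T(x^D' s)\<close> are at most \<open>(d + 1)/q \<le> d/q + 1/(p - 1)\<close>: the standard gauge is bounded with
  \<open>K = 1\<close>.
\<close>

abbreviation lookup where "lookup \<equiv> Poly_Mapping.lookup"
abbreviation keys where "keys \<equiv> Poly_Mapping.keys"
abbreviation single where "single \<equiv> Poly_Mapping.single"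

section \<open>Polynomials as finitely supported maps\<close>

lemma lookup_Abs_poly_mapping_finite [simp]:
  "lookup (Abs_poly_mapping (f :: 'n::finite \<Rightarrow> 'b::zero)) = f"
  by (rule lookup_Abs_poly_mapping) simp

lemma sum_single_lookup: "(\<Sum>\<beta>\<in>keys f. single \<beta> (lookup f \<beta>)) = f"
proof (rule poly_mapping_eqI)
  fix k
  have "lookup (\<Sum>\<beta>\<in>keys f. single \<beta> (lookup f \<beta>)) k = (\<Sum>\<beta>\<in>keys f. if \<beta> = k then lookup f \<beta> else 0)"
    unfolding lookup_sum by (intro sum.cong) (auto simp: lookup_single when_def)
  also have "\<dots> = lookup f k"
    by (simp add: sum.delta in_keys_iff)
  finally show "lookup (\<Sum>\<beta>\<in>keys f. single \<beta> (lookup f \<beta>)) k = lookup f k" .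
qed

lemma lookup_single_mult_add:
  "lookup (single \<beta> c * f) (\<beta> + \<alpha>) = c * lookup (f :: ('a::cancel_comm_monoid_add \<Rightarrow>\<^sub>0 'b::comm_semiring_1)) \<alpha>"
proof -
  have "single \<beta> c * f = (\<Sum>\<nu>\<in>keys f. single (\<beta> + \<nu>) (c * lookup f \<nu>))"
    by (subst (1) sum_single_lookup[of f, symmetric]) (simp add: sum_distrib_left mult_single)
  then have "lookup (single \<beta> c * f) (\<beta> + \<alpha>) = (\<Sum>\<nu>\<in>keys f. if \<nu> = \<alpha> then c * lookup f \<nu> else 0)"
    by (simp add: lookup_sum lookup_single when_def)
  also have "\<dots> = c * lookup f \<alpha>"
    by (simp add: sum.delta in_keys_iff)
  finally show ?thesis .
qed

lemma CHAR_poly_mapping: "CHAR('a::monoid_add \<Rightarrow>\<^sub>0 'b::comm_semiring_1) = CHAR('b)"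
proof -
  have "(of_nat n :: 'a \<Rightarrow>\<^sub>0 'b) = 0 \<longleftrightarrow> (of_nat n :: 'b) = 0" for n
  proof
    assume "(of_nat n :: 'a \<Rightarrow>\<^sub>0 'b) = 0"
    then have "lookup (of_nat n :: 'a \<Rightarrow>\<^sub>0 'b) 0 = 0"
      by simp
    then show "(of_nat n :: 'b) = 0"
      by (simp add: lookup_of_nat)
  qed (metis single_of_nat single_zero)
  then show ?thesis
    by (intro CHAR_eqI) (auto simp: of_nat_eq_0_iff_char_dvd)
qed

definition exp_scale :: "nat \<Rightarrow> ('n::finite \<Rightarrow>\<^sub>0 nat) \<Rightarrow> ('n \<Rightarrow>\<^sub>0 nat)" where
  "exp_scale q \<beta> = Abs_poly_mapping (\<lambda>j. q * lookup \<beta> j)"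

lemma single_power: "single \<alpha> c ^ n = single (exp_scale n \<alpha>) (c ^ n :: 'k::comm_semiring_1)"
proof (induction n)
  case 0
  have "exp_scale 0 \<alpha> = 0"
    by (simp add: poly_mapping_eq_iff exp_scale_def)
  then show ?case
    by simp
next
  case (Suc n)
  have "\<alpha> + exp_scale n \<alpha> = exp_scale (Suc n) \<alpha>"
    by (simp add: poly_mapping_eq_iff fun_eq_iff exp_scale_def lookup_add)
  then show ?case
    using Suc by (simp add: mult_single)
qed

section \<open>Roots of Frobenius in a perfect field\<close>

definition frob_root :: "nat \<Rightarrow> 'k::field \<Rightarrow> 'k" where
  "frob_root e = inv (\<lambda>x. x ^ CHAR('k) ^ e)"

context
  assumes prime_char: "prime CHAR('k::field)"
    and perfect: "surj (\<lambda>x::'k. x ^ CHAR('k))"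
begin

lemma inj_frobenius_power: "inj (\<lambda>x::'k. x ^ CHAR('k) ^ e)"
proof (rule injI)
  fix a b :: 'k
  assume eq: "a ^ CHAR('k) ^ e = b ^ CHAR('k) ^ e"
  have "(a - b) ^ CHAR('k) ^ e + b ^ CHAR('k) ^ e = a ^ CHAR('k) ^ e"
    using freshmans_dream'[OF prime_char refl, of "a - b" b e] by simp
  then show "a = b"
    using eq by simp
qed

lemma surj_frobenius_power: "surj (\<lambda>x::'k. x ^ CHAR('k) ^ e)"
proof (induction e)
  case (Suc e)
  have "(\<lambda>x::'k. x ^ CHAR('k) ^ Suc e) = (\<lambda>x. x ^ CHAR('k) ^ e) \<circ> (\<lambda>x. x ^ CHAR('k))"
    by (simp add: fun_eq_iff power_mult[symmetric] mult.commute)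
  then show ?case
    using comp_surj[OF perfect Suc] by metis
qed simp

lemma frob_root_power [simp]: "frob_root e c ^ CHAR('k) ^ e = (c :: 'k)"
  unfolding frob_root_def by (rule surj_f_inv_f[OF surj_frobenius_power])

lemma frob_root_of_power [simp]: "frob_root e (a ^ CHAR('k) ^ e) = (a :: 'k)"
  unfolding frob_root_def by (rule inv_f_f[OF inj_frobenius_power])

lemma frob_root_eqI: "y ^ CHAR('k) ^ e = c \<Longrightarrow> frob_root e c = (y :: 'k)"
  by auto

lemma frob_root_add: "frob_root e (a + b) = frob_root e a + frob_root e (b :: 'k)"
  by (rule frob_root_eqI) (simp add: freshmans_dream'[OF prime_char refl])

lemma frob_root_mult: "frob_root e (a * b) = frob_root e a * frob_root e (b :: 'k)"
  by (rule frob_root_eqI) (simp add: power_mult_distrib)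

lemma frob_root_zero [simp]: "frob_root e 0 = (0 :: 'k)"
  by (rule frob_root_eqI) (use prime_char prime_gt_0_nat in simp)

lemma frob_root_eq_0_iff [simp]: "frob_root e c = 0 \<longleftrightarrow> c = (0 :: 'k)"
proof
  assume "frob_root e c = 0"
  then have "c = 0 ^ CHAR('k) ^ e"
    using frob_root_power[of e c] by simp
  then show "c = 0"
    using prime_char prime_gt_0_nat by simp
qed simp

lemma frob_root_one [simp]: "frob_root e 1 = (1 :: 'k)"
  by (rule frob_root_eqI) simp

end

section \<open>The trace map\<close>

definition trace_exp :: "nat \<Rightarrow> ('n::finite \<Rightarrow>\<^sub>0 nat) \<Rightarrow> ('n \<Rightarrow>\<^sub>0 nat)" where
  "trace_exp q \<mu> = Abs_poly_mapping (\<lambda>j. q * lookup \<mu> j + (q - 1))"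

definition trace_map :: "nat \<Rightarrow> ('n::finite, 'k::field) poly_ring \<Rightarrow> ('n, 'k) poly_ring" where
  "trace_map e f = Abs_poly_mapping (\<lambda>\<mu>. frob_root e (lookup f (trace_exp (CHAR('k) ^ e) \<mu>)))"

lemma lookup_trace_exp [simp]: "lookup (trace_exp q \<mu>) j = q * lookup \<mu> j + (q - 1)"
  by (simp add: trace_exp_def)

lemma lookup_exp_scale [simp]: "lookup (exp_scale q \<beta>) j = q * lookup \<beta> j"
  by (simp add: exp_scale_def)

lemma inj_trace_exp:
  assumes "q > 0"
  shows "inj (trace_exp q)"
proof (rule injI)
  fix \<mu> \<nu> :: "'n::finite \<Rightarrow>\<^sub>0 nat"
  assume "trace_exp q \<mu> = trace_exp q \<nu>"
  then have "q * lookup \<mu> j = q * lookup \<nu> j" for j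
    by (metis lookup_trace_exp add_right_cancel)
  then show "\<mu> = \<nu>"
    using assms by (simp add: poly_mapping_eq_iff fun_eq_iff)
qed

lemma exp_scale_add_eq_trace_exp_iff:
  assumes "q > 0"
  shows "(\<exists>\<mu>. exp_scale q \<alpha> + \<nu> = trace_exp q \<mu>) \<longleftrightarrow> (\<exists>\<mu>. \<nu> = trace_exp q \<mu>)"
proof
  assume "\<exists>\<mu>. exp_scale q \<alpha> + \<nu> = trace_exp q \<mu>"
  then obtain \<mu> where eq: "q * lookup \<alpha> j + lookup \<nu> j = q * lookup \<mu> j + (q - 1)" for j
    by (auto simp: poly_mapping_eq_iff fun_eq_iff lookup_add)
  have le: "lookup \<alpha> j \<le> lookup \<mu> j" for j
  proof (rule ccontr)
    assume "\<not> ?thesis"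
    then have "q * Suc (lookup \<mu> j) \<le> q * lookup \<alpha> j"
      by (intro mult_le_mono2) simp
    then show False
      using eq[of j] assms by simp
  qed
  have "lookup \<nu> j = q * (lookup \<mu> j - lookup \<alpha> j) + (q - 1)" for j
    using eq[of j] le[of j] by (simp add: diff_mult_distrib2)
  then have "\<nu> = trace_exp q (Abs_poly_mapping (\<lambda>j. lookup \<mu> j - lookup \<alpha> j))"
    by (simp add: poly_mapping_eq_iff fun_eq_iff)
  then show "\<exists>\<mu>. \<nu> = trace_exp q \<mu>" ..
next
  assume "\<exists>\<mu>. \<nu> = trace_exp q \<mu>"
  then obtain \<mu> where "\<nu> = trace_exp q \<mu>" ..
  then have "exp_scale q \<alpha> + \<nu> = trace_exp q (\<alpha> + \<mu>)"
    by (simp add: poly_mapping_eq_iff fun_eq_iff lookup_add algebra_simps)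
  then show "\<exists>\<mu>. exp_scale q \<alpha> + \<nu> = trace_exp q \<mu>" ..
qed

context
  assumes prime_char: "prime CHAR('k::field)"
    and perfect: "surj (\<lambda>x::'k. x ^ CHAR('k))"
begin

lemma lookup_trace_map:
  "lookup (trace_map e f) \<mu> = frob_root e (lookup (f :: ('n::finite, 'k) poly_ring) (trace_exp (CHAR('k) ^ e) \<mu>))"
proof -
  have "CHAR('k) ^ e > 0"
    using prime_char prime_gt_0_nat by simp
  then have "finite (trace_exp (CHAR('k) ^ e) -` keys f)"
    by (intro finite_vimageI inj_trace_exp) auto
  moreover have "{\<mu>. frob_root e (lookup f (trace_exp (CHAR('k) ^ e) \<mu>)) \<noteq> 0}
      \<subseteq> trace_exp (CHAR('k) ^ e) -` keys f"
    using prime_char perfect by (auto simp: in_keys_iff)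
  ultimately show ?thesis
    unfolding trace_map_def by (simp add: finite_subset)
qed

lemma trace_map_add: "trace_map e (f + g) = trace_map e f + trace_map e (g :: ('n::finite, 'k) poly_ring)"
  by (rule poly_mapping_eqI)
     (simp add: lookup_trace_map lookup_add frob_root_add[OF prime_char perfect])

lemma trace_map_zero [simp]: "trace_map e (0 :: ('n::finite, 'k) poly_ring) = 0"
  by (rule poly_mapping_eqI) (simp add: lookup_trace_map prime_char perfect)

lemma trace_map_sum: "trace_map e (sum f A) = (\<Sum>a\<in>A. trace_map e (f a :: ('n::finite, 'k) poly_ring))"
  by (induction A rule: infinite_finite_induct) (simp_all add: trace_map_add)

lemma trace_map_diff: "trace_map e (f - g) = trace_map e f - trace_map e (g :: ('n::finite, 'k) poly_ring)"
  by (metis add_diff_cancel diff_add_cancel trace_map_add)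

lemma trace_map_single_trace_exp:
  "trace_map e (single (trace_exp (CHAR('k) ^ e) (\<mu> :: 'n::finite \<Rightarrow>\<^sub>0 nat)) c) = single \<mu> (frob_root e (c :: 'k))"
proof (rule poly_mapping_eqI)
  have "inj (trace_exp (CHAR('k) ^ e) :: ('n \<Rightarrow>\<^sub>0 nat) \<Rightarrow> _)"
    using prime_char prime_gt_0_nat by (simp add: inj_trace_exp)
  then show "lookup (trace_map e (single (trace_exp (CHAR('k) ^ e) \<mu>) c)) \<nu>
      = lookup (single \<mu> (frob_root e c)) \<nu>" for \<nu>
    by (auto simp: lookup_trace_map lookup_single when_def prime_char perfect dest: injD)
qed

lemma trace_map_single_eq_0:
  "(\<And>\<mu>. \<nu> \<noteq> trace_exp (CHAR('k) ^ e) \<mu>) \<Longrightarrow> trace_map e (single \<nu> (c :: 'k)) = (0 :: ('n::finite, 'k) poly_ring)"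
  by (rule poly_mapping_eqI) (auto simp: lookup_trace_map lookup_single when_def prime_char perfect)

lemma trace_map_exp_scale_single:
  "trace_map e (single (exp_scale (CHAR('k) ^ e) \<alpha> + \<nu>) (c ^ CHAR('k) ^ e * d))
    = single \<alpha> c * trace_map e (single \<nu> (d :: 'k) :: ('n::finite, 'k) poly_ring)"
proof (cases "\<exists>\<mu>. \<nu> = trace_exp (CHAR('k) ^ e) \<mu>")
  case True
  then obtain \<mu> where \<mu>: "\<nu> = trace_exp (CHAR('k) ^ e) \<mu>" ..
  have "exp_scale (CHAR('k) ^ e) \<alpha> + \<nu> = trace_exp (CHAR('k) ^ e) (\<alpha> + \<mu>)"
    by (simp add: \<mu> poly_mapping_eq_iff fun_eq_iff lookup_add algebra_simps)
  then show ?thesis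
    by (simp add: \<mu> trace_map_single_trace_exp mult_single frob_root_mult[OF prime_char perfect]
        prime_char perfect)
next
  case False
  moreover have "CHAR('k) ^ e > 0"
    using prime_char prime_gt_0_nat by simp
  ultimately have "\<nexists>\<mu>. exp_scale (CHAR('k) ^ e) \<alpha> + \<nu> = trace_exp (CHAR('k) ^ e) \<mu>"
    using exp_scale_add_eq_trace_exp_iff by blast
  then show ?thesis
    using False by (metis mult_zero_right trace_map_single_eq_0)
qed

lemma trace_map_frobenius_linear:
  "trace_map e (r ^ CHAR('k) ^ e * f) = r * trace_map e (f :: ('n::finite, 'k) poly_ring)"
proof -
  let ?q = "CHAR('k) ^ e"
  have "r ^ ?q = (\<Sum>\<alpha>\<in>keys r. single \<alpha> (lookup r \<alpha>)) ^ ?q"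
    by (simp add: sum_single_lookup)
  also have "\<dots> = (\<Sum>\<alpha>\<in>keys r. single \<alpha> (lookup r \<alpha>) ^ ?q)"
    by (rule freshmans_dream_sum') (simp_all add: CHAR_poly_mapping prime_char)
  also have "\<dots> = (\<Sum>\<alpha>\<in>keys r. single (exp_scale ?q \<alpha>) (lookup r \<alpha> ^ ?q))"
    by (simp add: single_power)
  finally have r: "r ^ ?q = \<dots>" .
  have trace_f: "trace_map e f = (\<Sum>\<nu>\<in>keys f. trace_map e (single \<nu> (lookup f \<nu>)))"
    using trace_map_sum[of e "\<lambda>\<nu>. single \<nu> (lookup f \<nu>)" "keys f"] by (simp add: sum_single_lookup)
  have "single (exp_scale ?q \<alpha>) (c ^ ?q) * f
      = (\<Sum>\<nu>\<in>keys f. single (exp_scale ?q \<alpha> + \<nu>) (c ^ ?q * lookup f \<nu>))" for \<alpha> c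
    by (subst (1) sum_single_lookup[of f, symmetric]) (simp add: sum_distrib_left mult_single)
  then have monomial: "trace_map e (single (exp_scale ?q \<alpha>) (c ^ ?q) * f) = single \<alpha> c * trace_map e f"
    for \<alpha> c
    by (simp add: trace_map_sum trace_map_exp_scale_single trace_f sum_distrib_left)
  have "trace_map e (r ^ ?q * f) = (\<Sum>\<alpha>\<in>keys r. single \<alpha> (lookup r \<alpha>) * trace_map e f)"
    by (simp add: r sum_distrib_right trace_map_sum monomial)
  also have "\<dots> = r * trace_map e f"
    by (simp add: sum_distrib_right[symmetric] sum_single_lookup)
  finally show ?thesis .
qed

end

section \<open>Monomial ideals\<close>

definition monomial_ideal_exps :: "('n \<Rightarrow>\<^sub>0 nat) set \<Rightarrow> ('n \<Rightarrow>\<^sub>0 nat) set" where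
  "monomial_ideal_exps G = {\<beta>. \<exists>g\<in>G. \<forall>j. lookup g j \<le> lookup \<beta> j}"

lemma monomial_ideal_exps_add:
  assumes "\<beta> \<in> monomial_ideal_exps G"
  shows "\<alpha> + \<beta> \<in> monomial_ideal_exps G"
proof -
  obtain g where g: "g \<in> G" "\<forall>j. lookup g j \<le> lookup \<beta> j"
    using assms unfolding monomial_ideal_exps_def by blast
  then have "\<forall>j. lookup g j \<le> lookup (\<alpha> + \<beta>) j"
    by (simp add: lookup_add trans_le_add2)
  then show ?thesis
    using g(1) unfolding monomial_ideal_exps_def by blast
qed

lemma monomial_ideal_zero: "0 \<in> monomial_ideal G"
  unfolding monomial_ideal_def by (intro CollectI exI[of _ "[]"]) simp

lemma monomial_ideal_add:
  fixes f g :: "('n, 'k::comm_ring_1) poly_ring"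
  assumes "f \<in> monomial_ideal G" and "g \<in> monomial_ideal G"
  shows "f + g \<in> monomial_ideal G"
proof -
  obtain fs gs :: "(('n, 'k) poly_ring \<times> ('n \<Rightarrow>\<^sub>0 nat)) list"
    where "\<forall>(c, \<beta>) \<in> set fs. \<beta> \<in> G" "f = sum_list (map (\<lambda>(c, \<beta>). c * monom_x \<beta>) fs)"
      and "\<forall>(c, \<beta>) \<in> set gs. \<beta> \<in> G" "g = sum_list (map (\<lambda>(c, \<beta>). c * monom_x \<beta>) gs)"
    using assms unfolding monomial_ideal_def by blast
  then show ?thesis
    unfolding monomial_ideal_def by (intro CollectI exI[of _ "fs @ gs"] conjI) auto
qed

lemma monomial_ideal_sum: "(\<And>a. a \<in> A \<Longrightarrow> h a \<in> monomial_ideal G) \<Longrightarrow> sum h A \<in> monomial_ideal G"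
  by (induction A rule: infinite_finite_induct) (auto simp: monomial_ideal_zero monomial_ideal_add)

lemma mult_monom_x_in_monomial_ideal: "\<beta> \<in> G \<Longrightarrow> c * monom_x \<beta> \<in> monomial_ideal G"
  unfolding monomial_ideal_def by (intro CollectI exI[of _ "[(c, \<beta>)]"]) simp

lemma keys_monomial_ideal:
  fixes f :: "('n, 'k::comm_ring_1) poly_ring"
  assumes "f \<in> monomial_ideal G"
  shows "keys f \<subseteq> monomial_ideal_exps G"
proof -
  obtain gs :: "(('n, 'k) poly_ring \<times> ('n \<Rightarrow>\<^sub>0 nat)) list"
    where gs: "\<forall>(c, \<beta>) \<in> set gs. \<beta> \<in> G" and f: "f = sum_list (map (\<lambda>(c, \<beta>). c * monom_x \<beta>) gs)"
    using assms unfolding monomial_ideal_def by blast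
  have monomial_keys: "keys (c * monom_x \<beta>) \<subseteq> monomial_ideal_exps G" if "\<beta> \<in> G" for c :: "('n, 'k) poly_ring" and \<beta>
  proof
    fix x
    assume "x \<in> keys (c * monom_x \<beta>)"
    then obtain a where "x = a + \<beta>"
      using keys_mult[of c "single \<beta> 1"] by (auto simp: monom_x_def)
    moreover have "\<beta> \<in> monomial_ideal_exps G"
      using that unfolding monomial_ideal_exps_def by auto
    ultimately show "x \<in> monomial_ideal_exps G"
      by (simp add: monomial_ideal_exps_add)
  qed
  then show ?thesis
    unfolding f using gs
  proof (induction gs)
    case (Cons a gs)
    obtain c \<beta> where a: "a = (c, \<beta>)"
      by fastforce
    then have "keys (c * monom_x \<beta>) \<subseteq> monomial_ideal_exps G"
      using Cons.prems monomial_keys by simp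
    moreover have "keys (sum_list (map (\<lambda>(c, \<beta>). c * monom_x \<beta>) gs)) \<subseteq> monomial_ideal_exps G"
      using Cons by simp
    ultimately show ?case
      using a keys_add[of "c * monom_x \<beta>"] by auto
  qed simp
qed

lemma monomial_ideal_iff_keys:
  "(f :: ('n, 'k::comm_ring_1) poly_ring) \<in> monomial_ideal G \<longleftrightarrow> keys f \<subseteq> monomial_ideal_exps G"
proof
  assume keys: "keys f \<subseteq> monomial_ideal_exps G"
  have "single \<beta> (lookup f \<beta>) \<in> monomial_ideal G" if \<beta>: "\<beta> \<in> keys f" for \<beta>
  proof -
    obtain g where g: "g \<in> G" "\<forall>j. lookup g j \<le> lookup \<beta> j"
      using keys \<beta> unfolding monomial_ideal_exps_def by blast
    then have "(\<beta> - g) + g = \<beta>"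
      by (simp add: poly_mapping_eq_iff fun_eq_iff lookup_add lookup_minus)
    then have "single \<beta> (lookup f \<beta>) = single (\<beta> - g) (lookup f \<beta>) * monom_x g"
      by (simp add: monom_x_def mult_single)
    then show ?thesis
      using mult_monom_x_in_monomial_ideal[OF g(1)] by simp
  qed
  then show "f \<in> monomial_ideal G"
    using monomial_ideal_sum[of "keys f" "\<lambda>\<beta>. single \<beta> (lookup f \<beta>)"] by (simp add: sum_single_lookup)
qed (rule keys_monomial_ideal)

lemma monomial_ideal_uminus: "f \<in> monomial_ideal G \<Longrightarrow> - f \<in> monomial_ideal G"
  by (simp add: monomial_ideal_iff_keys)

lemma monomial_ideal_diff: "f \<in> monomial_ideal G \<Longrightarrow> g \<in> monomial_ideal G \<Longrightarrow> f - g \<in> monomial_ideal G"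
  using monomial_ideal_add[OF _ monomial_ideal_uminus, of f G g] by simp

lemma single_in_monomial_ideal_iff:
  "single \<beta> c \<in> monomial_ideal G \<longleftrightarrow> c = 0 \<or> \<beta> \<in> monomial_ideal_exps G"
  by (auto simp: monomial_ideal_iff_keys)

lemma squarefree_monomial_ideal_exps_supp_mono:
  assumes "\<forall>\<alpha>\<in>G. squarefree_exp \<alpha>" and "\<beta> \<in> monomial_ideal_exps G"
    and "\<And>j. lookup \<beta> j \<noteq> 0 \<Longrightarrow> lookup \<beta>' j \<noteq> 0"
  shows "\<beta>' \<in> monomial_ideal_exps G"
proof -
  obtain g where g: "g \<in> G" "\<forall>j. lookup g j \<le> lookup \<beta> j"
    using assms(2) unfolding monomial_ideal_exps_def by blast
  have "lookup g j \<le> 1" for j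
    using assms(1) g(1) unfolding squarefree_exp_def by blast
  then have "lookup g j \<le> lookup \<beta>' j" for j
  proof (cases "lookup g j = 0")
    case False
    then have "lookup \<beta>' j \<noteq> 0"
      using g(2) assms(3) by (metis le_0_eq)
    then show ?thesis
      using \<open>lookup g j \<le> 1\<close> by linarith
  qed simp
  then show ?thesis
    using g(1) unfolding monomial_ideal_exps_def by blast
qed

section \<open>Decomposing a Cartier map into trace maps\<close>

definition exp_div :: "nat \<Rightarrow> ('n::finite \<Rightarrow>\<^sub>0 nat) \<Rightarrow> ('n \<Rightarrow>\<^sub>0 nat)" where
  "exp_div q \<alpha> = Abs_poly_mapping (\<lambda>j. lookup \<alpha> j div q)"

definition exp_mod :: "nat \<Rightarrow> ('n::finite \<Rightarrow>\<^sub>0 nat) \<Rightarrow> ('n \<Rightarrow>\<^sub>0 nat)" where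
  "exp_mod q \<alpha> = Abs_poly_mapping (\<lambda>j. lookup \<alpha> j mod q)"

definition residue_exps :: "nat \<Rightarrow> ('n::finite \<Rightarrow>\<^sub>0 nat) set" where
  "residue_exps q = {\<gamma>. \<forall>j. lookup \<gamma> j < q}"

lemma exp_scale_div_add_mod: "exp_scale q (exp_div q \<alpha>) + exp_mod q \<alpha> = \<alpha>"
  by (simp add: poly_mapping_eq_iff fun_eq_iff exp_div_def exp_mod_def lookup_add)

lemma exp_mod_in_residue_exps: "q > 0 \<Longrightarrow> exp_mod q \<alpha> \<in> residue_exps q"
  by (simp add: exp_mod_def residue_exps_def)

lemma finite_residue_exps: "finite (residue_exps q :: ('n::finite \<Rightarrow>\<^sub>0 nat) set)"
proof -
  have "{f :: 'n \<Rightarrow> nat. \<forall>j. f j < q} = {f. \<forall>j. (j \<in> UNIV \<longrightarrow> f j \<in> {..<q}) \<and> (j \<notin> UNIV \<longrightarrow> f j = 0)}"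
    by auto
  also have "finite \<dots>"
    by (rule finite_set_of_finite_funs) simp_all
  finally have "finite (lookup -` {f :: 'n \<Rightarrow> nat. \<forall>j. f j < q})"
    by (rule finite_vimageI) (simp add: inj_def lookup_inject)
  then show ?thesis
    by (simp add: residue_exps_def vimage_def)
qed

lemma trace_exp_minus_add_exp_mod:
  assumes "q > 0"
  shows "trace_exp q \<epsilon> - exp_mod q \<alpha> + \<alpha> = trace_exp q (\<epsilon> + exp_div q \<alpha>)"
proof -
  have "q * lookup \<epsilon> j + (q - 1) - lookup \<alpha> j mod q + lookup \<alpha> j
      = q * lookup \<epsilon> j + q * (lookup \<alpha> j div q) + (q - 1)" for j
    using mod_less_divisor[OF assms, of "lookup \<alpha> j"] div_mult_mod_eq[of "lookup \<alpha> j" q]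
      mult.commute[of q "lookup \<alpha> j div q"]
    by linarith
  then show ?thesis
    by (simp add: poly_mapping_eq_iff fun_eq_iff lookup_add lookup_minus exp_mod_def exp_div_def
        distrib_left)
qed

lemma trace_exp_minus_add_neq_trace_exp:
  assumes "\<gamma> \<in> residue_exps q" and "\<gamma> \<noteq> exp_mod q \<alpha>"
  shows "trace_exp q \<epsilon> - \<gamma> + \<alpha> \<noteq> trace_exp q \<mu>"
proof
  have \<gamma>: "lookup \<gamma> j < q" for j
    using assms(1) by (simp add: residue_exps_def)
  assume "trace_exp q \<epsilon> - \<gamma> + \<alpha> = trace_exp q \<mu>"
  then have eq: "q * lookup \<epsilon> j + (q - 1) - lookup \<gamma> j + lookup \<alpha> j = q * lookup \<mu> j + (q - 1)" for j
    by (auto simp: poly_mapping_eq_iff fun_eq_iff lookup_add lookup_minus)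
  have "q * lookup \<epsilon> j + lookup \<alpha> j = q * lookup \<mu> j + lookup \<gamma> j" for j
    using eq[of j] \<gamma>[of j] by linarith
  then have "(q * lookup \<epsilon> j + lookup \<alpha> j) mod q = (q * lookup \<mu> j + lookup \<gamma> j) mod q" for j
    by simp
  then have "lookup \<alpha> j mod q = lookup \<gamma> j" for j
    using \<gamma>[of j] by simp
  then have "\<gamma> = exp_mod q \<alpha>"
    by (simp add: poly_mapping_eq_iff fun_eq_iff exp_mod_def)
  then show False
    using assms(2) by simp
qed

context
  assumes prime_char: "prime CHAR('k::field)"
    and perfect: "surj (\<lambda>x::'k. x ^ CHAR('k))"
begin

lemma trace_map_trace_exp_minus_add:
  assumes "\<gamma> \<in> residue_exps (CHAR('k) ^ e)"
  shows "trace_map e (single (trace_exp (CHAR('k) ^ e) \<epsilon> - \<gamma> + \<alpha>) c)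
    = (if \<gamma> = exp_mod (CHAR('k) ^ e) \<alpha>
       then single (\<epsilon> + exp_div (CHAR('k) ^ e) \<alpha>) (frob_root e c)
       else (0 :: ('n::finite, 'k) poly_ring))"
proof (cases "\<gamma> = exp_mod (CHAR('k) ^ e) \<alpha>")
  case True
  moreover have "CHAR('k) ^ e > 0"
    using prime_char prime_gt_0_nat by simp
  ultimately show ?thesis
    by (simp add: trace_exp_minus_add_exp_mod trace_map_single_trace_exp prime_char perfect)
next
  case False
  then show ?thesis
    using trace_exp_minus_add_neq_trace_exp[OF assms False]
    by (simp add: trace_map_single_eq_0 prime_char perfect)
qed

lemma sum_trace_terms_monomial:
  fixes F :: "('n::finite \<Rightarrow>\<^sub>0 nat) \<Rightarrow> ('n, 'k) poly_ring" and e :: nat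
  defines "q \<equiv> CHAR('k) ^ e"
  shows "(\<Sum>(\<gamma>, \<epsilon>) \<in> Sigma (residue_exps q) (\<lambda>\<gamma>. keys (F \<gamma>)).
           trace_map e (single (trace_exp q \<epsilon> - \<gamma>) (lookup (F \<gamma>) \<epsilon> ^ q) * single \<alpha> c))
    = single (exp_div q \<alpha>) (frob_root e c) * F (exp_mod q \<alpha>)"
proof -
  let ?\<gamma>\<^sub>0 = "exp_mod q \<alpha>" and ?\<beta> = "exp_div q \<alpha>"
  have q: "q > 0"
    unfolding q_def using prime_char prime_gt_0_nat by simp
  have "(\<Sum>(\<gamma>, \<epsilon>) \<in> Sigma (residue_exps q) (\<lambda>\<gamma>. keys (F \<gamma>)).
           trace_map e (single (trace_exp q \<epsilon> - \<gamma>) (lookup (F \<gamma>) \<epsilon> ^ q) * single \<alpha> c))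
      = (\<Sum>(\<gamma>, \<epsilon>) \<in> Sigma (residue_exps q) (\<lambda>\<gamma>. keys (F \<gamma>)).
           trace_map e (single (trace_exp q \<epsilon> - \<gamma> + \<alpha>) (lookup (F \<gamma>) \<epsilon> ^ q * c)))"
    by (simp add: mult_single)
  also have "\<dots> = (\<Sum>\<gamma> \<in> residue_exps q. \<Sum>\<epsilon> \<in> keys (F \<gamma>).
           trace_map e (single (trace_exp q \<epsilon> - \<gamma> + \<alpha>) (lookup (F \<gamma>) \<epsilon> ^ q * c)))"
    by (rule sum.Sigma[symmetric]) (simp_all add: finite_residue_exps)
  also have "\<dots> = (\<Sum>\<gamma> \<in> residue_exps q. if \<gamma> = ?\<gamma>\<^sub>0
      then (\<Sum>\<epsilon> \<in> keys (F ?\<gamma>\<^sub>0). single (\<epsilon> + ?\<beta>) (lookup (F ?\<gamma>\<^sub>0) \<epsilon> * frob_root e c)) else 0)"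
    by (intro sum.cong refl)
       (simp add: q_def trace_map_trace_exp_minus_add frob_root_mult[OF prime_char perfect]
        prime_char perfect)
  also have "\<dots> = (\<Sum>\<epsilon> \<in> keys (F ?\<gamma>\<^sub>0). single (\<epsilon> + ?\<beta>) (lookup (F ?\<gamma>\<^sub>0) \<epsilon> * frob_root e c))"
    using exp_mod_in_residue_exps[OF q, of \<alpha>] by (simp add: sum.delta' finite_residue_exps)
  also have "\<dots> = single ?\<beta> (frob_root e c) * F ?\<gamma>\<^sub>0"
    by (subst (4) sum_single_lookup[symmetric])
       (simp add: sum_distrib_left mult_single add.commute mult.commute)
  finally show ?thesis .
qed

end

lemma cartier_map_zero:
  assumes "\<phi> \<in> cartier_maps p (monomial_ideal G) e"
  shows "\<phi> 0 \<in> monomial_ideal G"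
proof -
  have "\<phi> (0 + 0) - (\<phi> 0 + \<phi> 0) \<in> monomial_ideal G"
    using assms unfolding cartier_maps_def by blast
  then show ?thesis
    using monomial_ideal_uminus[of "- \<phi> 0" G] by simp
qed

lemma cartier_map_sum:
  assumes "\<phi> \<in> cartier_maps p (monomial_ideal G) e"
  shows "\<phi> (sum h A) - (\<Sum>a\<in>A. \<phi> (h a)) \<in> monomial_ideal G"
proof (induction A rule: infinite_finite_induct)
  case (insert x A)
  have "\<phi> (h x + sum h A) - (\<phi> (h x) + \<phi> (sum h A)) \<in> monomial_ideal G"
    using assms unfolding cartier_maps_def by blast
  from monomial_ideal_add[OF this insert.IH] show ?case
    using insert.hyps by (simp add: algebra_simps)
qed (use cartier_map_zero[OF assms] in simp_all)

context
  assumes prime_char: "prime CHAR('k::field)"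
    and perfect: "surj (\<lambda>x::'k. x ^ CHAR('k))"
begin

lemma cartier_map_monomial:
  fixes \<phi> :: "('n::finite, 'k) poly_ring \<Rightarrow> ('n, 'k) poly_ring"
  assumes "\<phi> \<in> cartier_maps CHAR('k) (monomial_ideal G) e"
  shows "\<phi> (single (exp_scale (CHAR('k) ^ e) \<beta> + \<gamma>) c) - single \<beta> (frob_root e c) * \<phi> (single \<gamma> 1)
    \<in> monomial_ideal G"
proof -
  have "single \<beta> (frob_root e c) ^ CHAR('k) ^ e * single \<gamma> 1 = single (exp_scale (CHAR('k) ^ e) \<beta> + \<gamma>) c"
    by (simp add: single_power mult_single prime_char perfect)
  moreover have "\<phi> (r ^ CHAR('k) ^ e * m) - r * \<phi> m \<in> monomial_ideal G" for r m
    using assms unfolding cartier_maps_def by blast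
  ultimately show ?thesis
    by metis
qed

lemma cartier_map_decomposition:
  fixes \<phi> :: "('n::finite, 'k) poly_ring \<Rightarrow> ('n, 'k) poly_ring" and e :: nat
  defines "q \<equiv> CHAR('k) ^ e"
  assumes \<phi>: "\<phi> \<in> cartier_maps CHAR('k) (monomial_ideal G) e"
  shows "\<phi> m - (\<Sum>(\<gamma>, \<epsilon>) \<in> Sigma (residue_exps q) (\<lambda>\<gamma>. keys (\<phi> (single \<gamma> 1))).
      trace_map e (single (trace_exp q \<epsilon> - \<gamma>) (lookup (\<phi> (single \<gamma> 1)) \<epsilon> ^ q) * m))
    \<in> monomial_ideal G"
proof -
  define R where "R m = (\<Sum>(\<gamma>, \<epsilon>) \<in> Sigma (residue_exps q) (\<lambda>\<gamma>. keys (\<phi> (single \<gamma> 1))).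
      trace_map e (single (trace_exp q \<epsilon> - \<gamma>) (lookup (\<phi> (single \<gamma> 1)) \<epsilon> ^ q) * m))" for m
  define h where "h \<beta> = single \<beta> (lookup m \<beta>)" for \<beta>
  have "R m = (\<Sum>\<beta>\<in>keys m. R (h \<beta>))"
    unfolding R_def h_def
    by (subst (1) sum_single_lookup[of m, symmetric])
       (simp add: sum_distrib_left trace_map_sum prime_char perfect sum.swap[of _ _ "keys m"] split_def)
  moreover have "\<phi> m = \<phi> (sum h (keys m))"
    by (simp add: h_def sum_single_lookup)
  ultimately have split: "\<phi> m - R m = (\<phi> (sum h (keys m)) - (\<Sum>\<beta>\<in>keys m. \<phi> (h \<beta>)))
      + (\<Sum>\<beta>\<in>keys m. \<phi> (h \<beta>) - R (h \<beta>))"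
    by (simp add: sum_subtractf)
  have monomial: "\<phi> (h \<beta>) - R (h \<beta>) \<in> monomial_ideal G" for \<beta>
  proof -
    have "R (h \<beta>) = single (exp_div q \<beta>) (frob_root e (lookup m \<beta>)) * \<phi> (single (exp_mod q \<beta>) 1)"
      unfolding R_def h_def q_def by (rule sum_trace_terms_monomial[OF prime_char perfect])
    then show ?thesis
      using cartier_map_monomial[OF \<phi>, of "exp_div q \<beta>" "exp_mod q \<beta>" "lookup m \<beta>"]
      by (simp add: h_def q_def exp_scale_div_add_mod)
  qed
  have "\<phi> m - R m \<in> monomial_ideal G"
    unfolding split by (intro monomial_ideal_add cartier_map_sum[OF \<phi>] monomial_ideal_sum monomial)
  then show ?thesis
    by (simp add: R_def)
qed

end

section \<open>Truncated trace generators\<close>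

definition exp_trunc :: "nat \<Rightarrow> ('n::finite \<Rightarrow>\<^sub>0 nat) \<Rightarrow> ('n \<Rightarrow>\<^sub>0 nat)" where
  "exp_trunc q D = Abs_poly_mapping (\<lambda>j. min (lookup D j) q)"

lemma lookup_exp_trunc [simp]: "lookup (exp_trunc q D) j = min (lookup D j) q"
  by (simp add: exp_trunc_def)

lemma exp_trunc_add_diff: "exp_trunc q D + (D - exp_trunc q D) = D"
  by (simp add: poly_mapping_eq_iff fun_eq_iff exp_trunc_def lookup_add lookup_minus)

lemma monom_x_exp_trunc_mult:
  "monom_x (exp_trunc q D) * (single (D - exp_trunc q D) c * m) = single D (c :: 'k::comm_ring_1) * m"
  by (simp add: monom_x_def mult.assoc[symmetric] mult_single exp_trunc_add_diff)

text \<open>The witness is \<open>\<beta>\<^sub>j = 1\<close> where \<open>D = q\<epsilon> + (q - 1) - \<gamma>\<close> was truncated and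
  \<open>\<beta>\<^sub>j = \<mu>\<^sub>j - \<epsilon>\<^sub>j\<close> elsewhere.\<close>

lemma trace_exp_eq_exp_trunc_add:
  assumes "q > 0" and "\<gamma> \<in> residue_exps q"
    and "trace_exp q \<mu> = exp_trunc q (trace_exp q \<epsilon> - \<gamma>) + \<alpha>"
  obtains \<beta> where "\<And>j. lookup \<alpha> j \<noteq> 0 \<Longrightarrow> lookup (exp_scale q \<beta> + \<gamma>) j \<noteq> 0"
    and "\<And>j. lookup (\<beta> + \<epsilon>) j \<noteq> 0 \<Longrightarrow> lookup \<mu> j \<noteq> 0"
proof -
  define D where "D j = q * lookup \<epsilon> j + (q - 1) - lookup \<gamma> j" for j
  define \<beta> where "\<beta> = Abs_poly_mapping (\<lambda>j. if q \<le> D j then 1 else lookup \<mu> j - lookup \<epsilon> j)"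
  have \<gamma>: "lookup \<gamma> j < q" for j
    using assms(2) by (simp add: residue_exps_def)
  have eq: "q * lookup \<mu> j + (q - 1) = min (D j) q + lookup \<alpha> j" for j
    using arg_cong[OF assms(3), of "\<lambda>x. lookup x j"]
    by (simp add: D_def exp_trunc_def lookup_add lookup_minus)
  have "(lookup \<alpha> j \<noteq> 0 \<longrightarrow> lookup (exp_scale q \<beta> + \<gamma>) j \<noteq> 0)
      \<and> (lookup (\<beta> + \<epsilon>) j \<noteq> 0 \<longrightarrow> lookup \<mu> j \<noteq> 0)" for j
  proof (cases "q \<le> D j")
    case True
    then have "lookup \<mu> j \<noteq> 0"
      using eq[of j] assms(1) by (cases "lookup \<mu> j") simp_all
    then show ?thesis
      using True assms(1) by (simp add: \<beta>_def lookup_add)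
  next
    case False
    then have eq': "q * lookup \<mu> j + lookup \<gamma> j = q * lookup \<epsilon> j + lookup \<alpha> j"
      using eq[of j] \<gamma>[of j] by (simp add: D_def)
    have le: "lookup \<epsilon> j \<le> lookup \<mu> j"
    proof (rule ccontr)
      assume "\<not> ?thesis"
      then have "q * Suc (lookup \<mu> j) \<le> q * lookup \<epsilon> j"
        by (intro mult_le_mono2) simp
      then show False
        using eq' \<gamma>[of j] by simp
    qed
    then have "q * (lookup \<mu> j - lookup \<epsilon> j) + lookup \<gamma> j = lookup \<alpha> j"
      using eq' by (simp add: diff_mult_distrib2)
    then show ?thesis
      using False le by (simp add: \<beta>_def lookup_add)
  qed
  then show ?thesis
    using that by blast
qed

definition trace_generators ::
  "('n::finite, 'k::field) poly_ring set \<Rightarrow> (nat \<times> (('n, 'k) poly_ring \<Rightarrow> ('n, 'k) poly_ring)) set" where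
  "trace_generators I = {(e, \<psi>). e \<ge> 1 \<and> \<psi> \<in> cartier_maps CHAR('k) I e \<and>
      (\<exists>D. (\<forall>j. lookup D j \<le> CHAR('k) ^ e) \<and> \<psi> = (\<lambda>m. trace_map e (monom_x D * m)))}"

context
  assumes prime_char: "prime CHAR('k::field)"
    and perfect: "surj (\<lambda>x::'k. x ^ CHAR('k))"
begin

lemma trace_map_exp_trunc_preserves_monomial_ideal:
  fixes \<phi> :: "('n::finite, 'k) poly_ring \<Rightarrow> ('n, 'k) poly_ring" and m :: "('n, 'k) poly_ring" and e :: nat
  defines "q \<equiv> CHAR('k) ^ e"
  assumes squarefree: "\<forall>\<alpha>\<in>G. squarefree_exp \<alpha>"
    and \<phi>: "\<phi> \<in> cartier_maps CHAR('k) (monomial_ideal G) e"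
    and \<gamma>: "\<gamma> \<in> residue_exps q" and \<epsilon>: "\<epsilon> \<in> keys (\<phi> (single \<gamma> 1))"
    and m: "m \<in> monomial_ideal G"
  shows "trace_map e (monom_x (exp_trunc q (trace_exp q \<epsilon> - \<gamma>)) * m) \<in> monomial_ideal G"
proof -
  let ?D' = "exp_trunc q (trace_exp q \<epsilon> - \<gamma>)"
  have q: "q > 0"
    unfolding q_def using prime_char prime_gt_0_nat by simp
  have "\<mu> \<in> monomial_ideal_exps G" if \<mu>: "\<mu> \<in> keys (trace_map e (monom_x ?D' * m))" for \<mu>
  proof -
    have "trace_exp q \<mu> \<in> keys (single ?D' 1 * m)"
      using \<mu> by (simp add: in_keys_iff lookup_trace_map[OF prime_char perfect]
          frob_root_eq_0_iff[OF prime_char perfect] q_def monom_x_def)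
    then obtain \<alpha> where \<alpha>: "\<alpha> \<in> keys m" and eq: "trace_exp q \<mu> = ?D' + \<alpha>"
      using keys_mult[of "single ?D' (1 :: 'k)" m] by auto
    obtain \<beta> where supp_\<alpha>: "\<And>j. lookup \<alpha> j \<noteq> 0 \<Longrightarrow> lookup (exp_scale q \<beta> + \<gamma>) j \<noteq> 0"
      and supp_\<mu>: "\<And>j. lookup (\<beta> + \<epsilon>) j \<noteq> 0 \<Longrightarrow> lookup \<mu> j \<noteq> 0"
      using trace_exp_eq_exp_trunc_add[OF q \<gamma> eq] by blast
    have "\<alpha> \<in> monomial_ideal_exps G"
      using keys_monomial_ideal[OF m] \<alpha> by blast
    then have "exp_scale q \<beta> + \<gamma> \<in> monomial_ideal_exps G"
      using squarefree_monomial_ideal_exps_supp_mono[OF squarefree] supp_\<alpha> by blast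
    then have "\<phi> (single (exp_scale q \<beta> + \<gamma>) 1) \<in> monomial_ideal G"
      using \<phi> unfolding cartier_maps_def by (simp add: single_in_monomial_ideal_iff)
    from monomial_ideal_diff[OF this cartier_map_monomial[OF prime_char perfect \<phi>, of \<beta> \<gamma> 1]]
    have "single \<beta> 1 * \<phi> (single \<gamma> 1) \<in> monomial_ideal G"
      by (simp add: q_def prime_char perfect)
    moreover have "lookup (single \<beta> 1 * \<phi> (single \<gamma> 1)) (\<beta> + \<epsilon>) \<noteq> 0"
      using \<epsilon> by (simp add: lookup_single_mult_add in_keys_iff)
    ultimately have "\<beta> + \<epsilon> \<in> monomial_ideal_exps G"
      by (meson in_keys_iff keys_monomial_ideal subsetD)
    then show ?thesis
      using squarefree_monomial_ideal_exps_supp_mono[OF squarefree] supp_\<mu> by blast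
  qed
  then show ?thesis
    by (auto simp: monomial_ideal_iff_keys)
qed

lemma trace_map_mult_in_cartier_maps:
  fixes D :: "'n::finite \<Rightarrow>\<^sub>0 nat" and I :: "('n, 'k) poly_ring set"
  assumes "0 \<in> I" and "\<forall>m\<in>I. trace_map e (monom_x D * m) \<in> I"
  shows "(\<lambda>m. trace_map e (monom_x D * m)) \<in> cartier_maps CHAR('k) I e"
proof -
  have "trace_map e (monom_x D * (r ^ CHAR('k) ^ e * m)) = r * trace_map e (monom_x D * m)"
    for r m :: "('n, 'k) poly_ring"
  proof -
    have "monom_x D * (r ^ CHAR('k) ^ e * m) = r ^ CHAR('k) ^ e * (monom_x D * m)"
      by (simp add: algebra_simps)
    then show ?thesis
      by (simp only: trace_map_frobenius_linear[OF prime_char perfect])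
  qed
  then show ?thesis
    using assms unfolding cartier_maps_def
    by (simp add: distrib_left trace_map_add[OF prime_char perfect])
qed

lemma exp_trunc_trace_map_in_trace_generators:
  fixes \<phi> :: "('n::finite, 'k) poly_ring \<Rightarrow> ('n, 'k) poly_ring" and e :: nat
  defines "q \<equiv> CHAR('k) ^ e"
  assumes squarefree: "\<forall>\<alpha>\<in>G. squarefree_exp \<alpha>"
    and \<phi>: "\<phi> \<in> cartier_maps CHAR('k) (monomial_ideal G) e" and "1 \<le> e"
    and \<gamma>: "\<gamma> \<in> residue_exps q" and \<epsilon>: "\<epsilon> \<in> keys (\<phi> (single \<gamma> 1))"
  shows "(e, \<lambda>m :: ('n, 'k) poly_ring. trace_map e (monom_x (exp_trunc q (trace_exp q \<epsilon> - \<gamma>)) * m))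
    \<in> trace_generators (monomial_ideal G)"
proof -
  have "(\<lambda>m :: ('n, 'k) poly_ring. trace_map e (monom_x (exp_trunc q (trace_exp q \<epsilon> - \<gamma>)) * m))
      \<in> cartier_maps CHAR('k) (monomial_ideal G) e"
    by (intro trace_map_mult_in_cartier_maps monomial_ideal_zero ballI)
       (use trace_map_exp_trunc_preserves_monomial_ideal[OF squarefree \<phi> \<gamma>[unfolded q_def] \<epsilon>]
        in \<open>simp add: q_def\<close>)
  moreover have "\<forall>j. lookup (exp_trunc q (trace_exp q \<epsilon> - \<gamma>)) j \<le> CHAR('k) ^ e"
    by (simp add: q_def)
  ultimately show ?thesis
    using \<open>1 \<le> e\<close> unfolding trace_generators_def by blast
qed

lemma trace_map_mult_S_d:
  fixes s :: "('n::finite, 'k) poly_ring"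
  assumes D: "\<forall>j. lookup D j \<le> CHAR('k) ^ e" and s: "s \<in> S_d d"
  shows "trace_map e (monom_x D * s) \<in> S_d ((d + 1) div CHAR('k) ^ e)"
  unfolding S_d_def
proof (intro CollectI ballI allI)
  define q where "q = CHAR('k) ^ e"
  have q: "q > 0"
    unfolding q_def using prime_char prime_gt_0_nat by simp
  fix \<mu> j
  assume "\<mu> \<in> keys (trace_map e (monom_x D * s))"
  then have "trace_exp q \<mu> \<in> keys (single D 1 * s)"
    by (simp add: in_keys_iff lookup_trace_map[OF prime_char perfect]
        frob_root_eq_0_iff[OF prime_char perfect] q_def monom_x_def)
  then obtain \<alpha> where eq: "trace_exp q \<mu> = D + \<alpha>" and \<alpha>: "\<alpha> \<in> keys s"
    using keys_mult[of "single D (1 :: 'k)" s] by auto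
  have "q * lookup \<mu> j + (q - 1) = lookup D j + lookup \<alpha> j"
    using arg_cong[OF eq, of "\<lambda>x. lookup x j"] by (simp add: lookup_add)
  moreover have "lookup \<alpha> j \<le> d"
    using s \<alpha> unfolding S_d_def by blast
  moreover have "lookup D j \<le> q"
    using D q_def by simp
  ultimately have "lookup \<mu> j * q \<le> d + 1"
    using q by (simp add: mult.commute)
  then show "lookup \<mu> j \<le> (d + 1) div CHAR('k) ^ e"
    using q unfolding q_def by (simp add: less_eq_div_iff_mult_less_eq)
qed

end

section \<open>Generators of the Cartier algebra and the gauge bound\<close>

lemma generates_Cplus_trace_generators:
  fixes G :: "('n::finite \<Rightarrow>\<^sub>0 nat) set"
  assumes prime_char: "prime CHAR('k::field)" and perfect: "surj (\<lambda>x::'k. x ^ CHAR('k))"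
    and squarefree: "\<forall>\<alpha>\<in>G. squarefree_exp \<alpha>"
  shows "generates_Cplus CHAR('k) (monomial_ideal G :: ('n, 'k) poly_ring set)
    (trace_generators (monomial_ideal G))"
  unfolding generates_Cplus_def
proof (intro conjI allI impI ballI)
  fix e :: nat and \<phi>
  assume e: "1 \<le> e" and \<phi>: "\<phi> \<in> cartier_maps CHAR('k) (monomial_ideal G :: ('n, 'k) poly_ring set) e"
  define q where "q = CHAR('k) ^ e"
  define P where "P = Sigma (residue_exps q) (\<lambda>\<gamma>. keys (\<phi> (single \<gamma> 1)))"
  define D :: "('n \<Rightarrow>\<^sub>0 nat) \<times> ('n \<Rightarrow>\<^sub>0 nat) \<Rightarrow> 'n \<Rightarrow>\<^sub>0 nat"
    where "D = (\<lambda>(\<gamma>, \<epsilon>). trace_exp q \<epsilon> - \<gamma>)"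
  define \<psi> where "\<psi> x = (\<lambda>m :: ('n, 'k) poly_ring. trace_map e (monom_x (exp_trunc q (D x)) * m))"
    for x
  define r where "r = (\<lambda>(\<gamma>, \<epsilon>). single (D (\<gamma>, \<epsilon>) - exp_trunc q (D (\<gamma>, \<epsilon>)))
      (lookup (\<phi> (single \<gamma> (1 :: 'k))) \<epsilon> ^ q))"
  have "finite P"
    unfolding P_def by (intro finite_SigmaI finite_residue_exps) simp
  then obtain xs where xs: "distinct xs" "set xs = P"
    using finite_distinct_list by blast
  have "(e, \<psi> x) \<in> trace_generators (monomial_ideal G)" if "x \<in> P" for x
    using that exp_trunc_trace_map_in_trace_generators[OF prime_char perfect squarefree \<phi> e]
    by (auto simp: P_def \<psi>_def D_def q_def)
  moreover have "(\<Sum>(\<psi>, r) \<leftarrow> map (\<lambda>x. (\<psi> x, r x)) xs. \<psi> (r * m))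
      = (\<Sum>(\<gamma>, \<epsilon>) \<in> P. trace_map e (single (trace_exp q \<epsilon> - \<gamma>) (lookup (\<phi> (single \<gamma> 1)) \<epsilon> ^ q) * m))"
    for m
    using xs by (simp add: comp_def sum_list_distinct_conv_sum_set split_def \<psi>_def r_def D_def
        monom_x_exp_trunc_mult)
  ultimately show "\<exists>cs. (\<forall>(\<psi>, r) \<in> set cs. (e, \<psi>) \<in> trace_generators (monomial_ideal G)) \<and>
      (\<forall>m. \<phi> m - (\<Sum>(\<psi>, r) \<leftarrow> cs. \<psi> (r * m)) \<in> monomial_ideal G)"
    using xs cartier_map_decomposition[OF prime_char perfect \<phi>]
    by (intro exI[of _ "map (\<lambda>x. (\<psi> x, r x)) xs"]) (auto simp: P_def q_def)
qed (auto simp: trace_generators_def)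

lemma in_M_one_iff: "in_M I [1] d f \<longleftrightarrow> (\<exists>s \<in> S_d d. f - s \<in> I)"
proof
  assume "in_M I [1] d f"
  then obtain ss where "length ss = 1" "set ss \<subseteq> S_d d" "f - sum_list (map2 (*) ss [1]) \<in> I"
    unfolding in_M_def by auto
  then show "\<exists>s \<in> S_d d. f - s \<in> I"
    by (cases ss) auto
next
  assume "\<exists>s \<in> S_d d. f - s \<in> I"
  then obtain s where "s \<in> S_d d" "f - s \<in> I" ..
  then show "in_M I [1] d f"
    unfolding in_M_def by (intro exI[of _ "[s]"]) simp
qed

lemma generates_R_one:
  assumes "0 \<in> I"
  shows "generates_R I [1]"
  unfolding generates_R_def
proof
  fix f
  show "\<exists>ss. length ss = length [1] \<and> f - sum_list (map2 (*) ss [1]) \<in> I"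
    using assms by (intro exI[of _ "[f]"]) simp
qed

lemma ex_in_S_d: "\<exists>d. (f :: ('n::finite, 'k::comm_ring_1) poly_ring) \<in> S_d d"
proof -
  define d where "d = (\<Sum>\<alpha>\<in>keys f. \<Sum>j\<in>UNIV. lookup \<alpha> j)"
  have "lookup \<alpha> j \<le> d" if "\<alpha> \<in> keys f" for \<alpha> j
  proof -
    have "lookup \<alpha> j \<le> (\<Sum>j\<in>UNIV. lookup \<alpha> j)"
      by (rule member_le_sum) auto
    also have "\<dots> \<le> d"
      unfolding d_def by (rule member_le_sum) (use that in auto)
    finally show ?thesis .
  qed
  then show ?thesis
    unfolding S_d_def by blast
qed

lemma real_Suc_div_le:
  assumes "2 \<le> p" and "p \<le> q"
  shows "real (Suc d div q) \<le> real d / real q + 1 / (real p - 1)"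
proof -
  have "real (Suc d div q) \<le> real (Suc d) / real q"
    by (rule of_nat_div_le_of_nat)
  also have "\<dots> = real d / real q + 1 / real q"
    by (simp add: add_divide_distrib)
  also have "1 / real q \<le> 1 / (real p - 1)"
    using assms by (intro divide_left_mono) auto
  finally show ?thesis
    by simp
qed

lemma gauge_trace_generator_le:
  fixes I :: "('n::finite, 'k::field) poly_ring set"
  assumes prime_char: "prime CHAR('k)" and perfect: "surj (\<lambda>x::'k. x ^ CHAR('k))"
    and "0 \<in> I" and generator: "(e, \<psi>) \<in> trace_generators I"
  shows "gauge I [1] (\<psi> r) \<le> gauge I [1] r / ereal (real (CHAR('k) ^ e)) + ereal (1 / (real CHAR('k) - 1))"
proof (cases "\<psi> r \<in> I")
  case True
  then show ?thesis
    by (simp add: gauge_def)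
next
  case False
  obtain D where "1 \<le> e" and cartier: "\<psi> \<in> cartier_maps CHAR('k) I e"
    and D: "\<forall>j. lookup D j \<le> CHAR('k) ^ e" and \<psi>: "\<psi> = (\<lambda>m. trace_map e (monom_x D * m))"
    using generator unfolding trace_generators_def by blast
  have "r \<notin> I"
    using False cartier unfolding cartier_maps_def by blast
  define d where "d = (LEAST d. in_M I [1] d r)"
  obtain d\<^sub>0 where "r \<in> S_d d\<^sub>0"
    using ex_in_S_d by blast
  then have "\<exists>d. in_M I [1] d r"
    using \<open>0 \<in> I\<close> unfolding in_M_one_iff by (intro exI bexI[of _ r]) simp_all
  then have "in_M I [1] d r"
    unfolding d_def by (rule LeastI_ex)
  then obtain s where s: "s \<in> S_d d" "r - s \<in> I"
    by (auto simp: in_M_one_iff)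
  have "\<psi> (r - s) \<in> I"
    using cartier s(2) unfolding cartier_maps_def by blast
  then have "\<psi> r - \<psi> s \<in> I"
    by (simp add: \<psi> right_diff_distrib trace_map_diff[OF prime_char perfect])
  moreover have "\<psi> s \<in> S_d (Suc d div CHAR('k) ^ e)"
    using trace_map_mult_S_d[OF prime_char perfect D s(1)] by (simp add: \<psi>)
  ultimately have "(LEAST d. in_M I [1] d (\<psi> r)) \<le> Suc d div CHAR('k) ^ e"
    by (intro Least_le) (auto simp: in_M_one_iff)
  moreover have "real (Suc d div CHAR('k) ^ e) \<le> real d / real (CHAR('k) ^ e) + 1 / (real CHAR('k) - 1)"
    using prime_ge_2_nat[OF prime_char] \<open>1 \<le> e\<close> by (intro real_Suc_div_le) (auto simp: self_le_power)
  ultimately show ?thesis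
    using False \<open>r \<notin> I\<close> prime_gt_0_nat[OF prime_char] by (simp add: gauge_def d_def)
qed

theorem proposition5p3:
  fixes I :: "('n::finite, 'k::field) poly_ring set"
  assumes "CHAR('k) > 0"
    and "surj (\<lambda>x::'k. x ^ CHAR('k))"
    and "squarefree_monomial_ideal I"
  shows "gauge_bounded CHAR('k) I"
proof -
  have prime_char: "prime CHAR('k)"
    using assms(1) by (rule prime_CHAR_semidom)
  obtain G where squarefree: "\<forall>\<alpha>\<in>G. squarefree_exp \<alpha>" and I: "I = monomial_ideal G"
    using assms(3) unfolding squarefree_monomial_ideal_def by blast
  have "generates_Cplus CHAR('k) I (trace_generators I)"
    unfolding I by (rule generates_Cplus_trace_generators[OF prime_char assms(2) squarefree])
  moreover have "generates_R I [1]"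
    unfolding I by (rule generates_R_one[OF monomial_ideal_zero])
  moreover have "gauge I [1] (\<psi> r) \<le> gauge I [1] r / ereal (real (CHAR('k) ^ e)) + ereal (1 / (real CHAR('k) - 1))"
    if "(e, \<psi>) \<in> trace_generators I" for e \<psi> r
    using gauge_trace_generator_le[OF prime_char assms(2) _ that] monomial_ideal_zero unfolding I by blast
  ultimately show ?thesis
    unfolding gauge_bounded_def by blast
qed

end
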